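(* In the robustified SAFFRON construction, let right node $k$ be a singleton whose defective item is $\ell$. Then the probability that the robust singleton rule at node $k$ fails to declare $\ell$ is at most $3n^{-\zeta}$, and the probability that it declares an item different from $\ell$ is at most $n^{-(2+\zeta)}$.
   Context: Items are indexed by $[n]$, $n=2^L$; exactly $K$ items are defective. $b_\ell\in\{0,1\}^L$ is the $L$-bit binary representation of $\ell-1$; $\overline{v}$ is the bitwise complement. Noise model: each test outcome is flipped independently with probability $q\in(0,1/2)$, i.e. the observed outcome vector is $y=A\odot x+w$ (addition mod 2), where $A\odot x$ is the vector of noiseless (Boolean OR) test outcomes and $w$ has i.i.d. Bernoulli$(q)$ entries. Assume an error-correcting code of rate $R$ with encoder $f:\{0,1\}^L\to\{0,1\}^{L/R}$ and decoder $g:\{0,1\}^{L/R}\to\{0,1\}^L$ such that for every $b\in\{0,1\}^L$, $\Pr(g(f(b)+w')\neq b)\le2^{-\zeta L}=n^{-\zeta}$ when $w'$ has i.i.d. Bernoulli$(q)$ entries, for a constant $\zeta>0$. Sequences $s_1=(i_1,\dots,i_n)$, $s_2=(j_1,\dots,j_n)$ are drawn independently and uniformly from $[n]^n$. Robustified signature of item $\ell$: $u_\ell=(f(b_\ell);\overline{f(b_\ell)};f(b_{i_\ell});\overline{f(b_{i_\ell})};f(b_{j_\ell});\overline{f(b_{j_\ell})})\in\{0,1\}^{6L/R}$. A bipartite graph with incidence matrix $T$ connects items to $M$ right nodes; for right node $k$ there are $6L/R$ tests, the $r$-th pooling items $\ell$ with $T_{k\ell}=1$ and $(u_\ell)_r=1$,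 so the observed measurement vector is $z_k=\bigvee_{\ell:T_{k\ell}x_\ell=1}u_\ell+w_k$ with $w_k$ i.i.d. Bernoulli$(q)$, split into six sections $z_k^1,\dots,z_k^6$ of length $L/R$. A right node is a singleton if connected to exactly one defective item. Robust singleton rule at node $k$: let $\ell_1,\ell_2,\ell_3$ be the indices with $b_{\ell_1}=g(z_k^1)$, $b_{\ell_2}=g(z_k^3)$, $b_{\ell_3}=g(z_k^5)$; if $i_{\ell_1}=\ell_2$ and $j_{\ell_1}=\ell_3$, declare item $\ell_1$ defective. Probabilities are over the noise and over $s_1,s_2$. *)

theory Defs
  imports "HOL-Probability.Probability"
begin

text \<open>Items are indexed 0-based by {0..<n}, n = 2^L; item x corresponds to the paper's item x+1,
  and bin L x is the L-bit binary representation of x (= b_(x+1) in the paper).\<close>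

definition bin :: "nat \<Rightarrow> nat \<Rightarrow> bool list" where
  "bin L x = map (\<lambda>i. odd (x div 2 ^ i)) [0..<L]"

definition from_bin :: "bool list \<Rightarrow> nat" where
  "from_bin bs = (\<Sum>i<length bs. if bs ! i then 2 ^ i else 0)"

definition xor_vec :: "bool list \<Rightarrow> bool list \<Rightarrow> bool list" where
  "xor_vec u v = map2 (\<noteq>) u v"

definition compl_vec :: "bool list \<Rightarrow> bool list" where
  "compl_vec u = map Not u"

definition noise :: "nat \<Rightarrow> real \<Rightarrow> bool list pmf" where
  "noise m q = map_pmf (\<lambda>w. map w [0..<m]) (Pi_pmf {..<m} False (\<lambda>_. bernoulli_pmf q))"

definition unif_seq :: "nat \<Rightarrow> (nat \<Rightarrow> nat) pmf" where
  "unif_seq n = pmf_of_set ({..<n} \<rightarrow>\<^sub>E {..<n})"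

definition signature :: "nat \<Rightarrow> (bool list \<Rightarrow> bool list) \<Rightarrow> (nat \<Rightarrow> nat) \<Rightarrow> (nat \<Rightarrow> nat) \<Rightarrow> nat \<Rightarrow> bool list" where
  "signature L f s1 s2 l =
     f (bin L l) @ compl_vec (f (bin L l)) @
     f (bin L (s1 l)) @ compl_vec (f (bin L (s1 l))) @
     f (bin L (s2 l)) @ compl_vec (f (bin L (s2 l)))"

definition or_vec :: "nat \<Rightarrow> nat set \<Rightarrow> (nat \<Rightarrow> bool list) \<Rightarrow> bool list" where
  "or_vec len A u = map (\<lambda>r. \<exists>l\<in>A. u l ! r) [0..<len]"

definition measurement :: "nat \<Rightarrow> nat \<Rightarrow> (bool list \<Rightarrow> bool list) \<Rightarrow> nat set \<Rightarrow> nat set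
    \<Rightarrow> (nat \<Rightarrow> nat) \<Rightarrow> (nat \<Rightarrow> nat) \<Rightarrow> bool list \<Rightarrow> bool list" where
  "measurement L m f S D s1 s2 w = xor_vec (or_vec (6 * m) (S \<inter> D) (signature L f s1 s2)) w"

definition sect :: "nat \<Rightarrow> nat \<Rightarrow> bool list \<Rightarrow> bool list" where
  "sect m j z = take m (drop ((j - 1) * m) z)"

definition robust_rule :: "nat \<Rightarrow> (bool list \<Rightarrow> bool list) \<Rightarrow> (nat \<Rightarrow> nat) \<Rightarrow> (nat \<Rightarrow> nat)
    \<Rightarrow> bool list \<Rightarrow> nat option" where
  "robust_rule m g s1 s2 z =
     (let l1 = from_bin (g (sect m 1 z));
          l2 = from_bin (g (sect m 3 z));
          l3 = from_bin (g (sect m 5 z))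
      in if s1 l1 = l2 \<and> s2 l1 = l3 then Some l1 else None)"

definition joint :: "nat \<Rightarrow> nat \<Rightarrow> real \<Rightarrow> ((nat \<Rightarrow> nat) \<times> (nat \<Rightarrow> nat) \<times> bool list) pmf" where
  "joint n m q = do { s1 \<leftarrow> unif_seq n; s2 \<leftarrow> unif_seq n; w \<leftarrow> noise (6 * m) q; return_pmf (s1, s2, w) }"

end

theory Submission
  imports Defs
begin

text \<open>At a singleton node the measurement is the signature of the defective item \<open>l\<close> plus
  noise, so each of the sections 1, 3, 5 decodes correctly except with probability
  \<open>n powr -\<zeta>\<close>; if all three do, the rule declares \<open>l\<close>, which gives the first bound by a union
  bound.  The rule can declare some \<open>l' \<noteq> l\<close> only if section 1 decodes wrongly to \<open>l'\<close> and the
  fresh random values \<open>s1 l'\<close>, \<open>s2 l'\<close> happen to match what sections 3 and 5 decode to.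
  Conditionally on the noise, those two events are independent and have probability at most
  \<open>1/n\<close> each, because \<open>s1 l'\<close> and \<open>s2 l'\<close> are uniform and independent of \<open>s1 l\<close>, \<open>s2 l\<close>.\<close>

lemma measure_bind_pmf_le_indicator:
  assumes "\<And>x. x \<in> set_pmf M \<Longrightarrow> measure_pmf.prob (K x) A \<le> c * indicator B x" "0 \<le> c"
  shows "measure_pmf.prob (bind_pmf M K) A \<le> c * measure_pmf.prob M B"
proof -
  have "ennreal (measure_pmf.prob (bind_pmf M K) A) = (\<integral>\<^sup>+x. ennreal (measure_pmf.prob (K x) A) \<partial>M)"
    by (simp add: measure_pmf.emeasure_eq_measure[symmetric])
  also have "\<dots> \<le> (\<integral>\<^sup>+x. ennreal c * indicator B x \<partial>M)"
  proof (intro nn_integral_mono_AE AE_pmfI)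
    fix x assume "x \<in> set_pmf M"
    then have "measure_pmf.prob (K x) A \<le> c * indicator B x"
      by (rule assms(1))
    then show "ennreal (measure_pmf.prob (K x) A) \<le> ennreal c * indicator B x"
      by (cases "x \<in> B") (auto intro: ennreal_leI simp: order_antisym measure_nonneg)
  qed
  also have "\<dots> = ennreal (c * measure_pmf.prob M B)"
    using assms(2) by (simp add: nn_integral_cmult_indicator measure_pmf.emeasure_eq_measure ennreal_mult)
  finally show ?thesis
    using assms(2) by (simp add: ennreal_le_iff)
qed

lemma measure_bind_pmf_le:
  assumes "\<And>x. x \<in> set_pmf M \<Longrightarrow> measure_pmf.prob (K x) A \<le> c" "0 \<le> c"
  shows "measure_pmf.prob (bind_pmf M K) A \<le> c"
  using measure_bind_pmf_le_indicator[of M K A c UNIV] assms by simp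

lemma length_bin [simp]: "length (bin L x) = L"
  by (simp add: bin_def)

lemma from_bin_bin: "from_bin (bin L x) = x mod 2 ^ L"
proof (induction L)
  case 0
  then show ?case by (simp add: from_bin_def bin_def)
next
  case (Suc L)
  have "from_bin (bin (Suc L) x) = from_bin (bin L x) + (if odd (x div 2 ^ L) then 2 ^ L else 0)"
    by (simp add: from_bin_def bin_def nth_append)
  also have "\<dots> = x mod 2 ^ L + 2 ^ L * (x div 2 ^ L mod 2)"
    using Suc by (auto simp: odd_iff_mod_2_eq_one even_iff_mod_2_eq_zero)
  also have "\<dots> = x mod 2 ^ Suc L"
    by (metis mod_mult2_eq power_Suc2 add.commute)
  finally show ?case .
qed

lemma from_bin_bin_eq [simp]: "x < 2 ^ L \<Longrightarrow> from_bin (bin L x) = x"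
  by (simp add: from_bin_bin)

lemma from_bin_less: "from_bin bs < 2 ^ length bs"
proof (induction bs rule: rev_induct)
  case Nil
  then show ?case by (simp add: from_bin_def)
next
  case (snoc b bs)
  have "from_bin (bs @ [b]) = from_bin bs + (if b then 2 ^ length bs else 0)"
    by (simp add: from_bin_def nth_append)
  then show ?case using snoc by auto
qed

lemma unif_seq_eq_Pi_pmf: "0 < n \<Longrightarrow> unif_seq n = Pi_pmf {..<n} undefined (\<lambda>_. pmf_of_set {..<n})"
  unfolding unif_seq_def
  by (subst Pi_pmf_of_set) (auto intro!: arg_cong[where f = pmf_of_set]
      simp: PiE_dflt_def PiE_def extensional_def Pi_def)

lemma set_pmf_unif_seq: "s \<in> set_pmf (unif_seq n) \<Longrightarrow> x < n \<Longrightarrow> s x < n"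
  unfolding unif_seq_def
  by (subst (asm) set_pmf_of_set) (auto simp: PiE_eq_empty_iff intro: finite_PiE)

lemma prob_unif_seq_coord_eq_le:
  assumes "a < n" "a \<noteq> b"
  shows "measure_pmf.prob (unif_seq n) {s. s a = h (s b)} \<le> 1 / real n"
proof -
  let ?U = "pmf_of_set {..<n}" and ?P = "Pi_pmf ({..<n} - {a}) undefined (\<lambda>_. pmf_of_set {..<n})"
  have "unif_seq n = map_pmf (\<lambda>(y, f). f(a := y)) (pair_pmf ?U ?P)"
    using assms by (subst unif_seq_eq_Pi_pmf, simp, subst Pi_pmf_insert[symmetric])
      (auto simp: insert_absorb)
  also have "\<dots> = bind_pmf ?P (\<lambda>f. map_pmf (\<lambda>y. f(a := y)) ?U)"
    unfolding pair_pmf_def map_bind_pmf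
    by (subst bind_commute_pmf) (simp add: map_pmf_def bind_assoc_pmf bind_return_pmf)
  finally have unif_seq_eq: "unif_seq n = \<dots>" .
  \<comment> \<open>with all other coordinates fixed, the event pins the uniform coordinate \<open>a\<close> to one value\<close>
  have "measure_pmf.prob (map_pmf (\<lambda>y. f(a := y)) ?U) {s. s a = h (s b)} \<le> 1 / real n" for f
  proof -
    have "measure_pmf.prob (map_pmf (\<lambda>y. f(a := y)) ?U) {s. s a = h (s b)}
        = measure_pmf.prob ?U {h (f b)}"
      using assms by (auto intro: arg_cong[where f = "measure_pmf.prob ?U"])
    also have "\<dots> \<le> 1 / real n"
      using assms by (simp add: measure_pmf_single, subst pmf_of_set) (auto simp: indicator_def)
    finally show ?thesis .
  qed
  then show ?thesis
    unfolding unif_seq_eq by (intro measure_bind_pmf_le) auto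
qed

lemma prob_pair_unif_seq_coord_eq_le:
  assumes "a < n" "a \<noteq> b"
  shows "measure_pmf.prob (pair_pmf (unif_seq n) (unif_seq n))
           {(s1, s2). s1 a = h1 (s1 b) \<and> s2 a = h2 (s2 b)} \<le> 1 / real n ^ 2"
proof -
  let ?B = "{s1. s1 a = h1 (s1 b)}"
  have "measure_pmf.prob (pair_pmf (unif_seq n) (unif_seq n))
          {(s1, s2). s1 a = h1 (s1 b) \<and> s2 a = h2 (s2 b)}
        \<le> 1 / real n * measure_pmf.prob (unif_seq n) ?B"
    unfolding pair_pmf_def
  proof (rule measure_bind_pmf_le_indicator)
    fix s1
    have "measure_pmf.prob (map_pmf (Pair s1) (unif_seq n))
            {(s1, s2). s1 a = h1 (s1 b) \<and> s2 a = h2 (s2 b)}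
          = indicator ?B s1 * measure_pmf.prob (unif_seq n) {s2. s2 a = h2 (s2 b)}"
      by (cases "s1 \<in> ?B") (auto intro: arg_cong[where f = "measure_pmf.prob (unif_seq n)"])
    also have "\<dots> \<le> 1 / real n * indicator ?B s1"
      using prob_unif_seq_coord_eq_le[OF assms] by (simp add: indicator_def)
    finally show "measure_pmf.prob (bind_pmf (unif_seq n) (\<lambda>s2. return_pmf (s1, s2)))
        {(s1, s2). s1 a = h1 (s1 b) \<and> s2 a = h2 (s2 b)} \<le> 1 / real n * indicator ?B s1"
      by (simp add: map_pmf_def)
  qed simp
  also have "\<dots> \<le> 1 / real n * (1 / real n)"
    using prob_unif_seq_coord_eq_le[OF assms] by (intro mult_left_mono) auto
  finally show ?thesis
    by (simp add: power2_eq_square)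
qed

lemma map_pmf_take_drop_noise:
  assumes "off + m \<le> N"
  shows "map_pmf (\<lambda>w. take m (drop off w)) (noise N q) = noise m q"
proof -
  define B where "B = (\<lambda>_::nat. bernoulli_pmf q)"
  have bij: "bij_betw (\<lambda>i. i + off) {..<m} {off..<off + m}"
    by (rule bij_betwI[where g = "\<lambda>i. i - off"]) auto
  have shift: "Pi_pmf {..<m} False B = map_pmf (\<lambda>g. g \<circ> (\<lambda>i. i + off)) (Pi_pmf {off..<off + m} False B)"
    unfolding B_def by (rule Pi_pmf_bij_betw[OF _ bij]) auto
  have restrict: "Pi_pmf {off..<off + m} False B
      = map_pmf (\<lambda>f x. if x \<in> {off..<off + m} then f x else False) (Pi_pmf {..<N} False B)"
    by (rule Pi_pmf_subset) (use assms in auto)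
  have "noise m q = map_pmf (\<lambda>w. map (\<lambda>i. w (i + off)) [0..<m]) (Pi_pmf {..<N} False B)"
    unfolding noise_def B_def[symmetric] shift restrict map_pmf_comp by (intro map_pmf_cong refl) auto
  also have "\<dots> = map_pmf (\<lambda>w. take m (drop off w)) (noise N q)"
    unfolding noise_def B_def map_pmf_comp
    using assms by (intro map_pmf_cong refl) (auto intro!: nth_equalityI simp: add.commute)
  finally show ?thesis ..
qed

lemma length_set_pmf_noise: "w \<in> set_pmf (noise N q) \<Longrightarrow> length w = N"
  by (auto simp: noise_def)

lemma prob_decode_sect_fail_le:
  assumes code: "\<And>b. length b = L \<Longrightarrow> measure_pmf.prob (noise m q) {w. g (xor_vec (f b) w) \<noteq> b} \<le> \<epsilon>"
    and "length b = L" "0 < j" "j * m \<le> N"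
  shows "measure_pmf.prob (noise N q) {w. g (xor_vec (f b) (sect m j w)) \<noteq> b} \<le> \<epsilon>"
proof -
  have "(j - 1) * m + m \<le> N"
    using assms(3,4) by (cases j) auto
  then have "measure_pmf.prob (noise N q) {w. g (xor_vec (f b) (sect m j w)) \<noteq> b}
      = measure_pmf.prob (noise m q) {w. g (xor_vec (f b) w) \<noteq> b}"
    by (simp add: sect_def map_pmf_take_drop_noise[symmetric] vimage_def)
  with code[OF assms(2)] show ?thesis by simp
qed

lemma sect_xor_vec: "sect m j (xor_vec u v) = xor_vec (sect m j u) (sect m j v)"
  by (simp add: sect_def xor_vec_def take_map drop_map take_zip drop_zip)

lemma length_xor_vec [simp]: "length (xor_vec u v) = min (length u) (length v)"
  by (simp add: xor_vec_def)

lemma length_sect: "j * m \<le> length z \<Longrightarrow> 0 < j \<Longrightarrow> length (sect m j z) = m"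
  by (cases j) (auto simp: sect_def)

lemma
  assumes "\<And>b. length b = L \<Longrightarrow> length (f b) = m"
  shows sect_1_signature: "sect m 1 (signature L f s1 s2 l) = f (bin L l)"
    and sect_3_signature: "sect m 3 (signature L f s1 s2 l) = f (bin L (s1 l))"
    and sect_5_signature: "sect m 5 (signature L f s1 s2 l) = f (bin L (s2 l))"
    and length_signature: "length (signature L f s1 s2 l) = 6 * m"
  using assms by (simp_all add: sect_def signature_def compl_vec_def)

lemma robust_rule_singleton:
  assumes "\<And>b. length b = L \<Longrightarrow> length (f b) = m" "S \<inter> D = {l}"
  shows "robust_rule m g s1 s2 (measurement L m f S D s1 s2 w) =
    (let l1 = from_bin (g (xor_vec (f (bin L l)) (sect m 1 w)));
         l2 = from_bin (g (xor_vec (f (bin L (s1 l))) (sect m 3 w)));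
         l3 = from_bin (g (xor_vec (f (bin L (s2 l))) (sect m 5 w)))
     in if s1 l1 = l2 \<and> s2 l1 = l3 then Some l1 else None)"
proof -
  have "or_vec (6 * m) (S \<inter> D) (signature L f s1 s2) = signature L f s1 s2 l"
    using length_signature[OF assms(1)] assms(2) by (auto simp: or_vec_def intro!: nth_equalityI)
  then show ?thesis
    by (simp only: measurement_def robust_rule_def sect_xor_vec
        sect_1_signature[OF assms(1)] sect_3_signature[OF assms(1)] sect_5_signature[OF assms(1)])
qed

lemma prob_robust_rule_miss_le:
  assumes f_len: "\<And>b. length b = L \<Longrightarrow> length (f b) = m"
    and code: "\<And>b. length b = L \<Longrightarrow> measure_pmf.prob (noise m q) {w. g (xor_vec (f b) w) \<noteq> b} \<le> \<epsilon>"
    and singleton: "S \<inter> D = {l}" and "l < 2 ^ L"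
  shows "measure_pmf.prob (joint (2 ^ L) m q)
           {(s1, s2, w). robust_rule m g s1 s2 (measurement L m f S D s1 s2 w) \<noteq> Some l} \<le> 3 * \<epsilon>"
proof -
  let ?N = "noise (6 * m) q"
  define fail where "fail = (\<lambda>x j. {w. g (xor_vec (f (bin L x)) (sect m j w)) \<noteq> bin L x})"
  have prob_fail: "measure_pmf.prob ?N (fail x j) \<le> \<epsilon>" if "j \<in> {1, 3, 5}" for x j
    unfolding fail_def using that by (intro prob_decode_sect_fail_le[OF code]) auto
  have "0 \<le> \<epsilon>"
    by (rule order_trans[OF measure_nonneg code[of "replicate L False"]]) simp
  moreover have "measure_pmf.prob (map_pmf (\<lambda>w. (s1, s2, w)) ?N)
      {(s1, s2, w). robust_rule m g s1 s2 (measurement L m f S D s1 s2 w) \<noteq> Some l} \<le> 3 * \<epsilon>"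
    if "s1 l < 2 ^ L" "s2 l < 2 ^ L" for s1 s2
  proof -
    have "measure_pmf.prob (map_pmf (\<lambda>w. (s1, s2, w)) ?N)
          {(s1, s2, w). robust_rule m g s1 s2 (measurement L m f S D s1 s2 w) \<noteq> Some l}
        \<le> measure_pmf.prob ?N (fail l 1 \<union> fail (s1 l) 3 \<union> fail (s2 l) 5)"
      unfolding measure_map_pmf using that \<open>l < 2 ^ L\<close>
      by (intro measure_pmf.finite_measure_mono)
        (auto simp: fail_def robust_rule_singleton[OF f_len singleton] Let_def)
    also have "\<dots> \<le> measure_pmf.prob ?N (fail l 1) + measure_pmf.prob ?N (fail (s1 l) 3)
                    + measure_pmf.prob ?N (fail (s2 l) 5)"
      by (smt (verit) measure_Un_le sets_measure_pmf UNIV_I)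
    also have "\<dots> \<le> 3 * \<epsilon>"
      using prob_fail[of 1 l] prob_fail[of 3 "s1 l"] prob_fail[of 5 "s2 l"] by simp
    finally show ?thesis .
  qed
  ultimately show ?thesis
    unfolding joint_def map_pmf_def[symmetric] using \<open>l < 2 ^ L\<close>
    by (intro measure_bind_pmf_le[of "unif_seq _"]) (auto dest: set_pmf_unif_seq)
qed

lemma prob_robust_rule_false_alarm_le:
  assumes f_len: "\<And>b. length b = L \<Longrightarrow> length (f b) = m"
    and g_len: "\<And>z. length z = m \<Longrightarrow> length (g z) = L"
    and code: "\<And>b. length b = L \<Longrightarrow> measure_pmf.prob (noise m q) {w. g (xor_vec (f b) w) \<noteq> b} \<le> \<epsilon>"
    and singleton: "S \<inter> D = {l}" and "l < 2 ^ L"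
  shows "measure_pmf.prob (joint (2 ^ L) m q)
           {(s1, s2, w). \<exists>l'. l' \<noteq> l \<and> robust_rule m g s1 s2 (measurement L m f S D s1 s2 w) = Some l'}
         \<le> \<epsilon> / real (2 ^ L) ^ 2"
proof -
  let ?n = "2 ^ L :: nat" and ?N = "noise (6 * m) q"
  let ?A = "{(s1, s2, w). \<exists>l'. l' \<noteq> l \<and> robust_rule m g s1 s2 (measurement L m f S D s1 s2 w) = Some l'}"
  define fail where "fail = {w. g (xor_vec (f (bin L l)) (sect m 1 w)) \<noteq> bin L l}"
  have "joint ?n m q = bind_pmf ?N (\<lambda>w. map_pmf (\<lambda>(s1, s2). (s1, s2, w)) (pair_pmf (unif_seq ?n) (unif_seq ?n)))"
    unfolding joint_def pair_pmf_def map_bind_pmf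
    by (subst bind_commute_pmf, subst (2) bind_commute_pmf) (simp add: map_pmf_def bind_return_pmf)
  also have "measure_pmf.prob \<dots> ?A \<le> 1 / real ?n ^ 2 * measure_pmf.prob ?N fail"
  proof (rule measure_bind_pmf_le_indicator)
    fix w assume "w \<in> set_pmf ?N"
    define a where "a = from_bin (g (xor_vec (f (bin L l)) (sect m 1 w)))"
    define h3 where "h3 = (\<lambda>x. from_bin (g (xor_vec (f (bin L x)) (sect m 3 w))))"
    define h5 where "h5 = (\<lambda>x. from_bin (g (xor_vec (f (bin L x)) (sect m 5 w))))"
    have "length (g (xor_vec (f (bin L l)) (sect m 1 w))) = L"
      using \<open>w \<in> set_pmf ?N\<close> f_len by (intro g_len) (simp add: length_sect length_set_pmf_noise)
    then have "a < ?n"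
      unfolding a_def by (metis from_bin_less)
    have A_eq: "(\<lambda>(s1, s2). (s1, s2, w)) -` ?A
        = {(s1, s2). a \<noteq> l \<and> s1 a = h3 (s1 l) \<and> s2 a = h5 (s2 l)}"
      by (auto simp: robust_rule_singleton[OF f_len singleton] a_def h3_def h5_def Let_def
          split: if_splits)
    show "measure_pmf.prob (map_pmf (\<lambda>(s1, s2). (s1, s2, w)) (pair_pmf (unif_seq ?n) (unif_seq ?n))) ?A
        \<le> 1 / real ?n ^ 2 * indicator fail w"
    proof (cases "a = l")
      case True
      then show ?thesis by (simp only: measure_map_pmf A_eq) simp
    next
      case False
      then have "w \<in> fail"
        using \<open>l < 2 ^ L\<close> by (auto simp: fail_def a_def)
      with False prob_pair_unif_seq_coord_eq_le[OF \<open>a < ?n\<close> False, of h3 h5] show ?thesis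
        by (simp only: measure_map_pmf A_eq) simp
    qed
  qed simp
  also have "\<dots> \<le> 1 / real ?n ^ 2 * \<epsilon>"
    unfolding fail_def by (intro mult_left_mono prob_decode_sect_fail_le[OF code]) auto
  finally show ?thesis
    by simp
qed

theorem lemma2:
  fixes L m K :: nat and R q \<zeta> :: real
    and f g :: "bool list \<Rightarrow> bool list"
    and S D :: "nat set" and l :: nat
  defines "n \<equiv> 2 ^ L"
  assumes q: "0 < q" "q < 1/2"
    and rate: "0 < R" "real m = real L / R"
    and zeta: "\<zeta> > 0"
    and f_len: "\<And>b. length b = L \<Longrightarrow> length (f b) = m"
    and g_len: "\<And>z. length z = m \<Longrightarrow> length (g z) = L"
    and code: "\<And>b. length b = L \<Longrightarrow>
        measure_pmf.prob (noise m q) {w. g (xor_vec (f b) w) \<noteq> b} \<le> real n powr (- \<zeta>)"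
    and D: "D \<subseteq> {..<n}" "card D = K"
    and S: "S \<subseteq> {..<n}"
    and singleton: "S \<inter> D = {l}"
  shows "measure_pmf.prob (joint n m q)
           {(s1, s2, w). robust_rule m g s1 s2 (measurement L m f S D s1 s2 w) \<noteq> Some l}
           \<le> 3 * real n powr (- \<zeta>)
       \<and> measure_pmf.prob (joint n m q)
           {(s1, s2, w). \<exists>l'. l' \<noteq> l \<and> robust_rule m g s1 s2 (measurement L m f S D s1 s2 w) = Some l'}
           \<le> real n powr (- (2 + \<zeta>))"
proof
  have "l < n"
    using singleton S by auto
  then show "measure_pmf.prob (joint n m q)
      {(s1, s2, w). robust_rule m g s1 s2 (measurement L m f S D s1 s2 w) \<noteq> Some l}
      \<le> 3 * real n powr (- \<zeta>)"
    unfolding n_def using prob_robust_rule_miss_le[OF f_len code[unfolded n_def] singleton] by simp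
  have "real n powr (- (2 + \<zeta>)) = real n powr (- \<zeta>) * real n powr (- 2)"
    by (subst powr_add[symmetric]) (simp add: algebra_simps)
  also have "\<dots> = real n powr (- \<zeta>) / real n ^ 2"
    unfolding n_def by (simp add: powr_minus powr_numeral divide_inverse)
  finally have "real n powr (- (2 + \<zeta>)) = real n powr (- \<zeta>) / real n ^ 2" .
  with \<open>l < n\<close> show "measure_pmf.prob (joint n m q)
      {(s1, s2, w). \<exists>l'. l' \<noteq> l \<and> robust_rule m g s1 s2 (measurement L m f S D s1 s2 w) = Some l'}
      \<le> real n powr (- (2 + \<zeta>))"
    unfolding n_def
    using prob_robust_rule_false_alarm_le[OF f_len g_len code[unfolded n_def] singleton] by simp
qed

end
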